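(* Let $D$ be a period domain, $F\in D$ a reference point, and $V\subset G_{\mathbb R}$ the (compact) stabilizer of $F$. Then every element of $\Lambda^k\big((\mathfrak g^{-1,1})^\vee\oplus(\mathfrak g^{1,-1})^\vee\big)$ that is invariant under the action induced by $\mathrm{Ad}(V)$ lies in $\bigoplus_{p}\Lambda^p(\mathfrak g^{-1,1})^\vee\otimes\Lambda^p(\mathfrak g^{1,-1})^\vee$, i.e. is of type $(p,p)$. Equivalently: the $G_{\mathbb R}$-invariant forms on $D$ that are orthogonal to the algebraic ideal generated by $I$ and $\bar I$ are all of type $(p,p)$.
   Context: $H$ is a finite-dimensional $\mathbb Q$-vector space with non-degenerate bilinear form $Q$, $Q(u,v)=(-1)^nQ(v,u)$; $D$ is the period domain of polarized Hodge structures $H_{\mathbb C}=\bigoplus_{p+q=n}H^{p,q}$ (with $\overline{H^{p,q}}=H^{q,p}$, $Q(F^p,F^{n-p+1})=0$, $Q(Cu,\bar u)>0$ for $u\neq 0$, $C=i^{p-q}$ on $H^{p,q}$, $F^p=\bigoplus_{p'\ge p}H^{p',n-p'}$) with fixed Hodge numbers; $G_{\mathbb R}=\mathrm{Aut}(H_{\mathbb R},Q)$ acts transitively on $D$, $D=G_{\mathbb R}/V$. At $F$, the complexified Lie algebra decomposes as $\mathfrak g_{\mathbb C}=\bigoplus_r\mathfrak g^{r,-r}$, $\mathfrak g^{r,-r}=\{X: X(H^{p,q})\subset H^{p+r,q-r}\}$, with $\mathfrak v_{\mathbb C}=\mathfrak g^{0,0}$; $\mathrm{Ad}(V)$ preserves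 each $\mathfrak g^{r,-r}$. $T^{1,0}_FD\cong\bigoplus_{r>0}\mathfrak g^{-r,r}$, $T^{0,1}_FD\cong\bigoplus_{r>0}\mathfrak g^{r,-r}$. The infinitesimal period relation $I\subset T^{*1,0}D$ is the annihilator of $\mathfrak g^{-1,1}$, and $\bar I$ its conjugate; forms at $F$ orthogonal (for the Hodge metrics) to the algebraic ideal generated by $I,\bar I$ are identified with $\Lambda^*\big((\mathfrak g^{-1,1})^\vee\oplus(\mathfrak g^{1,-1})^\vee\big)$, and $G_{\mathbb R}$-invariant forms correspond to $\mathrm{Ad}(V)$-invariant elements at $F$. Type $(p,q)$ refers to the summand $\Lambda^p(\mathfrak g^{-1,1})^\vee\otimes\Lambda^q(\mathfrak g^{1,-1})^\vee$. *)

theory Defs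
  imports "HOL-Analysis.Analysis"
begin

text \<open>H = Q^N with N = CARD('m); the form Q is a real matrix with
  rational entries, Q(u,v) = u^T Q v, extended complex-bilinearly to H_C = complex^'m.
  A Hodge structure of weight n is given by its components H^{p,n-p}, indexed by the
  integer p (with H^{p,n-p} = 0 for p outside 0..n).\<close>

definition cmat :: "real^'m^'m \<Rightarrow> complex^'m^'m" where
  "cmat A = (\<chi> i j. complex_of_real (A $ i $ j))"

definition cvec_cnj :: "complex^'m \<Rightarrow> complex^'m" where
  "cvec_cnj v = (\<chi> i. cnj (v $ i))"

definition bform :: "real^'m^'m \<Rightarrow> complex^'m \<Rightarrow> complex^'m \<Rightarrow> complex" where
  "bform Q u v = (\<Sum>i\<in>UNIV. \<Sum>j\<in>UNIV. u $ i * complex_of_real (Q $ i $ j) * v $ j)"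

definition csubspace :: "(complex^'m) set \<Rightarrow> bool" where
  "csubspace S \<longleftrightarrow> 0 \<in> S \<and> (\<forall>u\<in>S. \<forall>v\<in>S. u + v \<in> S) \<and> (\<forall>c. \<forall>u\<in>S. c *s u \<in> S)"

definition hodge_filt :: "nat \<Rightarrow> (int \<Rightarrow> (complex^'m) set) \<Rightarrow> int \<Rightarrow> (complex^'m) set" where
  "hodge_filt n H p = {v. \<exists>u. (\<forall>p'. u p' \<in> H p') \<and> v = (\<Sum>p'\<in>{p..int n}. u p')}"

text \<open>Weil operator C = i^{p-q} on H^{p,q}, q = n - p.\<close>
definition weil_applied :: "nat \<Rightarrow> (int \<Rightarrow> complex^'m) \<Rightarrow> complex^'m" where
  "weil_applied n u = (\<Sum>p\<in>{0..int n}. (\<i> powi (2*p - int n)) *s u p)"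

definition polarized_hodge_structure ::
  "real^'m^'m \<Rightarrow> nat \<Rightarrow> (int \<Rightarrow> (complex^'m) set) \<Rightarrow> bool" where
  "polarized_hodge_structure Q n H \<longleftrightarrow>
     \<comment> \<open>Q is defined over the rationals, non-degenerate and (-1)^n-symmetric\<close>
     (\<forall>i j. Q $ i $ j \<in> \<rat>) \<and> det Q \<noteq> 0 \<and> transpose Q = (-1)^n *\<^sub>R Q \<and>
     \<comment> \<open>Hodge decomposition\<close>
     (\<forall>p. csubspace (H p)) \<and>
     (\<forall>p. (p < 0 \<or> p > int n) \<longrightarrow> H p = {0}) \<and>
     (\<forall>v. \<exists>!u. (\<forall>p. u p \<in> H p) \<and> v = (\<Sum>p\<in>{0..int n}. u p)) \<and>
     (\<forall>p. cvec_cnj ` H p = H (int n - p)) \<and>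
     \<comment> \<open>first Hodge--Riemann bilinear relation\<close>
     (\<forall>p\<in>{0..int n + 1}. \<forall>u\<in>hodge_filt n H p. \<forall>v\<in>hodge_filt n H (int n - p + 1).
         bform Q u v = 0) \<and>
     \<comment> \<open>second Hodge--Riemann bilinear relation: Q(Cu, conj u) > 0 for u \<noteq> 0\<close>
     (\<forall>u. (\<forall>p. u p \<in> H p) \<longrightarrow> (\<Sum>p\<in>{0..int n}. u p) \<noteq> 0 \<longrightarrow>
        (let z = bform Q (weil_applied n u) (cvec_cnj (\<Sum>p\<in>{0..int n}. u p))
         in Im z = 0 \<and> Re z > 0))"

definition lie_gC :: "real^'m^'m \<Rightarrow> (complex^'m^'m) set" where
  "lie_gC Q = {X. transpose X ** cmat Q + cmat Q ** X = 0}"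

definition gpiece :: "real^'m^'m \<Rightarrow> (int \<Rightarrow> (complex^'m) set) \<Rightarrow> int \<Rightarrow> (complex^'m^'m) set" where
  "gpiece Q H r = {X \<in> lie_gC Q. \<forall>p. \<forall>u\<in>H p. X *v u \<in> H (p + r)}"

definition Wsp :: "real^'m^'m \<Rightarrow> (int \<Rightarrow> (complex^'m) set) \<Rightarrow> (complex^'m^'m) set" where
  "Wsp Q H = {A + B | A B. A \<in> gpiece Q H (-1) \<and> B \<in> gpiece Q H 1}"

definition GR :: "real^'m^'m \<Rightarrow> (real^'m^'m) set" where
  "GR Q = {g. transpose g ** Q ** g = Q}"

definition stabV :: "real^'m^'m \<Rightarrow> nat \<Rightarrow> (int \<Rightarrow> (complex^'m) set) \<Rightarrow> (real^'m^'m) set" where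
  "stabV Q n H = {g \<in> GR Q. \<forall>p. (\<lambda>v. cmat g *v v) ` hodge_filt n H p = hodge_filt n H p}"

definition Ad :: "real^'m^'m \<Rightarrow> complex^'m^'m \<Rightarrow> complex^'m^'m" where
  "Ad g X = cmat g ** X ** matrix_inv (cmat g)"

definition mscale :: "complex \<Rightarrow> complex^'m^'m \<Rightarrow> complex^'m^'m" where
  "mscale c X = (\<chi> i j. c * X $ i $ j)"

text \<open>Elements of \<Lambda>^k W^\<or> = alternating complex k-linear forms on W
  (represented by their values on length-k lists of elements of W).\<close>
definition alt_multilinear_on :: "(complex^'m^'m) set \<Rightarrow> nat \<Rightarrow> ((complex^'m^'m) list \<Rightarrow> complex) \<Rightarrow> bool" where
  "alt_multilinear_on W k \<omega> \<longleftrightarrow>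
     (\<forall>xs i c u v. length xs = k \<longrightarrow> set xs \<subseteq> W \<longrightarrow> i < k \<longrightarrow> u \<in> W \<longrightarrow> v \<in> W \<longrightarrow>
         \<omega> (xs[i := mscale c u + v]) =
         c * \<omega> (xs[i := u]) + \<omega> (xs[i := v])) \<and>
     (\<forall>xs i j. length xs = k \<longrightarrow> set xs \<subseteq> W \<longrightarrow> i < k \<longrightarrow> j < k \<longrightarrow> i \<noteq> j \<longrightarrow>
         xs ! i = xs ! j \<longrightarrow> \<omega> xs = 0)"

definition Ad_invariant :: "(real^'m^'m) set \<Rightarrow> (complex^'m^'m) set \<Rightarrow> nat \<Rightarrow> ((complex^'m^'m) list \<Rightarrow> complex) \<Rightarrow> bool" where
  "Ad_invariant V W k \<omega> \<longleftrightarrow>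
     (\<forall>g\<in>V. \<forall>xs. length xs = k \<longrightarrow> set xs \<subseteq> W \<longrightarrow> \<omega> (map (Ad g) xs) = \<omega> xs)"

text \<open>\<omega> lies in the sum over p of \<Lambda>^p (g^{-1,1})^\<or> \<otimes> \<Lambda>^p (g^{1,-1})^\<or>: its
  component of type (p,q) (determined by its values on p arguments from g^{-1,1}
  followed by q arguments from g^{1,-1}) vanishes whenever p \<noteq> q.\<close>
definition sum_of_pp_type :: "real^'m^'m \<Rightarrow> (int \<Rightarrow> (complex^'m) set) \<Rightarrow> nat \<Rightarrow> ((complex^'m^'m) list \<Rightarrow> complex) \<Rightarrow> bool" where
  "sum_of_pp_type Q H k \<omega> \<longleftrightarrow>
     (\<forall>as bs. length as + length bs = k \<longrightarrow> length as \<noteq> length bs \<longrightarrow>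
        set as \<subseteq> gpiece Q H (-1) \<longrightarrow> set bs \<subseteq> gpiece Q H 1 \<longrightarrow> \<omega> (as @ bs) = 0)"

end

theory Submission
  imports Defs
begin

text \<open>The circle group acts on \<open>H\<^sub>\<complex>\<close> by letting \<open>e^{it}\<close> act on \<open>H^{p,q}\<close> as
  multiplication by \<open>e^{i(p-q)t}\<close>. This action commutes with complex conjugation (so it is
  real), preserves \<open>Q\<close> (only \<open>H^{p,q}\<close> and \<open>H^{q,p}\<close> pair non-trivially, and there the two
  factors are conjugate) and preserves the Hodge filtration, so it lies in the stabiliser \<open>V\<close>.
  Its adjoint action is multiplication by \<open>e^{2irt}\<close> on \<open>\<g>^{r,-r}\<close>. Hence an invariant form,
  evaluated on \<open>p\<close> arguments from \<open>\<g>^{-1,1}\<close> followed by \<open>q\<close> arguments from \<open>\<g>^{1,-1}\<close>,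
  satisfies \<open>\<omega> = e^{2i(q-p)t} \<omega>\<close>; for \<open>p \<noteq> q\<close> choose \<open>t\<close> with \<open>e^{2i(q-p)t} = -1\<close>.\<close>

lemma real_matrix_if_commutes_cnj:
  fixes L :: "complex^'m \<Rightarrow> complex^'m"
  assumes add: "\<And>v w. L (v + w) = L v + L w" and scale: "\<And>c v. L (c *s v) = c *s L v"
    and cnj: "\<And>v. L (cvec_cnj v) = cvec_cnj (L v)"
  shows "\<exists>g. \<forall>v. cmat g *v v = L v"
proof -
  have L0: "L 0 = 0" using add[of 0 0] by simp
  have L_sum: "L (\<Sum>j\<in>S. f j) = (\<Sum>j\<in>S. L (f j))" if "finite S" for S and f :: "'m \<Rightarrow> complex^'m"
    using that by (induction S rule: finite_induct) (auto simp: L0 add)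
  define g :: "real^'m^'m" where "g = (\<chi> i j. Re (L (axis j 1) $ i))"
  have "cvec_cnj (axis j 1) = (axis j 1 :: complex^'m)" for j
    by (auto simp: cvec_cnj_def axis_def vec_eq_iff)
  then have "cnj (L (axis j 1) $ i) = L (axis j 1) $ i" for i j
    using cnj[of "axis j 1"] by (metis cvec_cnj_def vec_lambda_beta)
  then have real_entries: "complex_of_real (Re (L (axis j 1) $ i)) = L (axis j 1) $ i" for i j
    by (simp add: complex_eq_iff)
  have "cmat g *v v = L v" for v
  proof -
    have "L v = L (\<Sum>j\<in>UNIV. v $ j *s axis j 1)" by (simp add: basis_expansion)
    also have "\<dots> = (\<Sum>j\<in>UNIV. v $ j *s L (axis j 1))" by (simp add: L_sum scale)
    finally show ?thesis
      by (simp add: vec_eq_iff matrix_vector_mult_def cmat_def g_def real_entries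
          sum_component mult.commute)
  qed
  then show ?thesis by blast
qed

lemma matrix_inv_eqI:
  fixes A B :: "'a::semiring_1^'n^'n"
  assumes "A ** B = mat 1" and "B ** A = mat 1"
  shows "matrix_inv A = B"
proof -
  have "A ** matrix_inv A = mat 1"
    unfolding matrix_inv_def by (rule someI2[of _ B]) (use assms in auto)
  then have "B ** (A ** matrix_inv A) = B" by simp
  then show ?thesis by (simp add: matrix_mul_assoc assms(2))
qed

lemma cvec_cnj_sum: "cvec_cnj (\<Sum>i\<in>S. f i) = (\<Sum>i\<in>S. cvec_cnj (f i))"
  by (induction S rule: infinite_finite_induct) (auto simp: cvec_cnj_def vec_eq_iff)

lemma cvec_cnj_scale: "cvec_cnj (c *s v) = cnj c *s cvec_cnj v"
  by (auto simp: cvec_cnj_def vec_eq_iff)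

lemma matrix_vector_mult_sum: "(X::'a::field^'m^'n) *v (\<Sum>i\<in>S. f i) = (\<Sum>i\<in>S. X *v f i)"
  by (rule vec.linear_sum[OF matrix_vector_mul_linear_gen])

lemma bform_add_left: "bform Q (u + w) v = bform Q u v + bform Q w v"
  unfolding bform_def by (simp add: distrib_right sum.distrib)

lemma bform_add_right: "bform Q u (v + w) = bform Q u v + bform Q u w"
  unfolding bform_def by (simp add: distrib_left sum.distrib)

lemma bform_zero_left [simp]: "bform Q 0 v = 0"
  and bform_zero_right [simp]: "bform Q u 0 = 0"
  unfolding bform_def by simp_all

lemma bform_sum_left: "bform Q (\<Sum>p\<in>S. f p) v = (\<Sum>p\<in>S. bform Q (f p) v)"
  by (induction S rule: infinite_finite_induct) (auto simp: bform_add_left)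

lemma bform_sum_right: "bform Q u (\<Sum>p\<in>S. f p) = (\<Sum>p\<in>S. bform Q u (f p))"
  by (induction S rule: infinite_finite_induct) (auto simp: bform_add_right)

lemma bform_scale_left: "bform Q (c *s u) v = c * bform Q u v"
  unfolding bform_def by (simp add: sum_distrib_left mult_ac)

lemma bform_scale_right: "bform Q u (c *s v) = c * bform Q u v"
  unfolding bform_def by (simp add: sum_distrib_left mult_ac)

lemma bform_cnj: "bform Q (cvec_cnj u) (cvec_cnj v) = cnj (bform Q u v)"
  unfolding bform_def cvec_cnj_def by simp

lemma sum_axis_mult_left: "(\<Sum>a\<in>UNIV. axis i (1::'a::comm_ring_1) $ a * f a) = f i"
  and sum_axis_mult_right: "(\<Sum>a\<in>UNIV. f a * axis i (1::'a) $ a) = f i"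
  by (simp_all add: axis_def if_distrib if_distribR cong: if_cong)

lemma bform_axis: "bform Q (axis i 1) (axis j 1) = complex_of_real (Q $ i $ j)"
  unfolding bform_def by (simp add: sum_axis_mult_left sum_axis_mult_right)

lemma cmat_mult_axis: "cmat g *v axis i 1 = (\<chi> a. complex_of_real (g $ a $ i))"
  by (simp add: vec_eq_iff matrix_vector_mult_def cmat_def axis_def if_distrib cong: if_cong)

lemma bform_cmat_axis:
  "bform Q (cmat g *v axis i 1) (cmat g *v axis j 1) = complex_of_real ((transpose g ** Q ** g) $ i $ j)"
proof -
  have "(transpose g ** Q ** g) $ i $ j = (\<Sum>b\<in>UNIV. \<Sum>a\<in>UNIV. g $ a $ i * Q $ a $ b * g $ b $ j)"
    by (simp add: matrix_matrix_mult_def transpose_def sum_distrib_right)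
  also have "\<dots> = (\<Sum>a\<in>UNIV. \<Sum>b\<in>UNIV. g $ a $ i * Q $ a $ b * g $ b $ j)"
    by (rule sum.swap)
  finally show ?thesis unfolding cmat_mult_axis bform_def by simp
qed

lemma GR_memI:
  assumes "\<And>u v. bform Q (cmat g *v u) (cmat g *v v) = bform Q u v"
  shows "g \<in> GR Q"
proof -
  have "(transpose g ** Q ** g) $ i $ j = Q $ i $ j" for i j
    using assms[of "axis i 1" "axis j 1"] unfolding bform_cmat_axis bform_axis by simp
  then show ?thesis unfolding GR_def by (simp add: vec_eq_iff)
qed

lemma mscale_matrix_vector_mult: "mscale c X *v v = c *s (X *v v)"
  by (simp add: vec_eq_iff matrix_vector_mult_def mscale_def sum_distrib_left mult_ac)

lemma mscale_add: "mscale c (X + Y) = mscale c X + mscale c Y"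
  by (simp add: vec_eq_iff mscale_def distrib_left)

lemma mscale_in_lie_gC:
  fixes X :: "complex^'m^'m"
  assumes "X \<in> lie_gC Q"
  shows "mscale c X \<in> lie_gC Q"
proof -
  have "transpose (mscale c X) = mscale c (transpose X)" "mscale c X ** Y = mscale c (X ** Y)"
    "Y ** mscale c X = mscale c (Y ** X)" "mscale c 0 = 0" for X Y :: "complex^'m^'m"
    by (simp_all add: vec_eq_iff transpose_def mscale_def matrix_matrix_mult_def
        sum_distrib_left mult_ac)
  with assms show ?thesis
    unfolding lie_gC_def by (simp add: mscale_add[symmetric])
qed

subsection \<open>The circle action of a polarized Hodge structure\<close>

locale polarized_hodge =
  fixes Q :: "real^'m^'m" and n :: nat and H :: "int \<Rightarrow> (complex^'m) set"
  assumes polarized: "polarized_hodge_structure Q n H"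
begin

lemma Hodge_subspaces: "\<forall>p. csubspace (H p)"
  and Hodge_out_of_range: "\<forall>p. p < 0 \<or> p > int n \<longrightarrow> H p = {0}"
  and Hodge_decomposition: "\<forall>v. \<exists>!u. (\<forall>p. u p \<in> H p) \<and> v = (\<Sum>p\<in>{0..int n}. u p)"
  and cnj_Hodge: "\<forall>p. cvec_cnj ` H p = H (int n - p)"
  and first_bilinear_relation: "\<forall>p\<in>{0..int n + 1}. \<forall>u\<in>hodge_filt n H p.
         \<forall>v\<in>hodge_filt n H (int n - p + 1). bform Q u v = 0"
  using polarized unfolding polarized_hodge_structure_def by - (elim conjE, assumption)+

lemma zero_in_Hodge: "0 \<in> H p"
  using Hodge_subspaces unfolding csubspace_def by simp

lemma Hodge_add: "u \<in> H p \<Longrightarrow> v \<in> H p \<Longrightarrow> u + v \<in> H p"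
  using Hodge_subspaces unfolding csubspace_def by simp

lemma Hodge_scale: "u \<in> H p \<Longrightarrow> c *s u \<in> H p"
  using Hodge_subspaces unfolding csubspace_def by simp

lemma cnj_in_Hodge: "y \<in> H p \<Longrightarrow> cvec_cnj y \<in> H (int n - p)"
  using cnj_Hodge by blast

definition hodge_comp :: "complex^'m \<Rightarrow> int \<Rightarrow> complex^'m" where
  "hodge_comp v = (THE u. (\<forall>p. u p \<in> H p) \<and> v = (\<Sum>p\<in>{0..int n}. u p))"

lemma hodge_comp_in: "hodge_comp v p \<in> H p"
  and sum_hodge_comp: "(\<Sum>p\<in>{0..int n}. hodge_comp v p) = v"
  using theI'[OF Hodge_decomposition[rule_format, of v]] unfolding hodge_comp_def by auto

lemma hodge_comp_unique: "(\<And>p. u p \<in> H p) \<Longrightarrow> v = (\<Sum>p\<in>{0..int n}. u p) \<Longrightarrow> hodge_comp v = u"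
  unfolding hodge_comp_def by (rule the1_equality[OF Hodge_decomposition[rule_format]]) auto

lemma Hodge_in_filt: "x \<in> H q \<Longrightarrow> p \<le> q \<Longrightarrow> q \<le> int n \<Longrightarrow> x \<in> hodge_filt n H p"
  unfolding hodge_filt_def
  by (intro CollectI exI[of _ "\<lambda>p'. if p' = q then x else 0"] conjI allI)
    (auto simp: zero_in_Hodge)

lemma bform_Hodge_eq_0_if_gt:
  assumes "x \<in> H p" "y \<in> H q" "p + q > int n"
  shows "bform Q x y = 0"
proof (cases "x = 0 \<or> y = 0")
  case True
  then show ?thesis by auto
next
  case False
  then have "p \<in> {0..int n}" "q \<in> {0..int n}"
    using assms Hodge_out_of_range by force+
  then show ?thesis
    by (intro first_bilinear_relation[rule_format, of p]) (use assms in \<open>auto intro!: Hodge_in_filt\<close>)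
qed

text \<open>The second case is reduced to the first one by complex conjugation.\<close>
lemma bform_Hodge_eq_0:
  assumes "x \<in> H p" "y \<in> H q" "p + q \<noteq> int n"
  shows "bform Q x y = 0"
proof (cases "p + q > int n")
  case True
  then show ?thesis using bform_Hodge_eq_0_if_gt assms by blast
next
  case False
  have "bform Q (cvec_cnj x) (cvec_cnj y) = 0"
    by (rule bform_Hodge_eq_0_if_gt[OF cnj_in_Hodge[OF assms(1)] cnj_in_Hodge[OF assms(2)]])
      (use False assms in auto)
  then show ?thesis by (simp add: bform_cnj)
qed

text \<open>\<open>hodge_char t p = e^{i(p-q)t}\<close> with \<open>q = n - p\<close>.\<close>
definition hodge_char :: "real \<Rightarrow> int \<Rightarrow> complex" where
  "hodge_char t p = cis (real_of_int (2*p - int n) * t)"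

definition hodge_rotation :: "real \<Rightarrow> complex^'m \<Rightarrow> complex^'m" where
  "hodge_rotation t v = (\<Sum>p\<in>{0..int n}. hodge_char t p *s hodge_comp v p)"

lemma hodge_char_add: "hodge_char s p * hodge_char t p = hodge_char (s + t) p"
  unfolding hodge_char_def by (simp add: cis_mult distrib_left)

lemma hodge_char_dual: "hodge_char t (int n - p) = cnj (hodge_char t p)"
  unfolding hodge_char_def by (simp add: cis_cnj algebra_simps)

lemma hodge_char_shift: "hodge_char t (p + r) = cis (real_of_int (2*r) * t) * hodge_char t p"
  unfolding hodge_char_def by (simp add: cis_mult algebra_simps)

lemma hodge_char_cnj_mult: "cnj (hodge_char t p) * hodge_char t p = 1"
  unfolding hodge_char_def by (simp add: cis_cnj cis_mult)

lemma hodge_rotation_add: "hodge_rotation t (v + w) = hodge_rotation t v + hodge_rotation t w"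
proof -
  have "hodge_comp (v + w) = (\<lambda>p. hodge_comp v p + hodge_comp w p)"
    by (rule hodge_comp_unique) (auto intro: Hodge_add hodge_comp_in simp: sum.distrib sum_hodge_comp)
  then show ?thesis unfolding hodge_rotation_def by (simp add: sum.distrib vector_add_ldistrib)
qed

lemma hodge_rotation_scale: "hodge_rotation t (c *s v) = c *s hodge_rotation t v"
proof -
  have "hodge_comp (c *s v) = (\<lambda>p. c *s hodge_comp v p)"
    by (rule hodge_comp_unique)
      (auto intro: Hodge_scale hodge_comp_in simp: vec.scale_sum_right[symmetric] sum_hodge_comp)
  then show ?thesis
    unfolding hodge_rotation_def by (simp add: vec.scale_sum_right vector_smult_assoc mult.commute)
qed

lemma hodge_rotation_sum: "hodge_rotation t (\<Sum>i\<in>S. f i) = (\<Sum>i\<in>S. hodge_rotation t (f i))"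
  using hodge_rotation_scale[of t 0 0] hodge_rotation_add
  by (induction S rule: infinite_finite_induct) auto

lemma hodge_rotation_Hodge:
  assumes y: "y \<in> H q"
  shows "hodge_rotation t y = hodge_char t q *s y"
proof (cases "q \<in> {0..int n}")
  case True
  have "hodge_comp y = (\<lambda>p. if p = q then y else 0)"
    by (rule hodge_comp_unique) (use True y zero_in_Hodge in auto)
  then show ?thesis unfolding hodge_rotation_def using True by (simp add: if_distrib cong: if_cong)
next
  case False
  then have "y = 0" using y Hodge_out_of_range by auto
  moreover have "hodge_comp 0 = (\<lambda>p. 0)" by (rule hodge_comp_unique) (auto simp: zero_in_Hodge)
  ultimately show ?thesis unfolding hodge_rotation_def by simp
qed

lemma hodge_rotation_compose: "hodge_rotation s (hodge_rotation t v) = hodge_rotation (s + t) v"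
proof -
  have "hodge_rotation s (hodge_rotation t v) =
      (\<Sum>p\<in>{0..int n}. hodge_rotation s (hodge_char t p *s hodge_comp v p))"
    unfolding hodge_rotation_def[of t] by (simp add: hodge_rotation_sum)
  also have "\<dots> = (\<Sum>p\<in>{0..int n}. hodge_char (s + t) p *s hodge_comp v p)"
    by (rule sum.cong) (auto simp: hodge_rotation_scale hodge_rotation_Hodge[OF hodge_comp_in]
        vector_smult_assoc hodge_char_add add.commute[of t s])
  finally show ?thesis unfolding hodge_rotation_def .
qed

lemma hodge_rotation_0: "hodge_rotation 0 v = v"
  unfolding hodge_rotation_def by (simp add: hodge_char_def sum_hodge_comp)

lemma hodge_rotation_cnj: "hodge_rotation t (cvec_cnj v) = cvec_cnj (hodge_rotation t v)"
proof -
  have "hodge_rotation t (cvec_cnj v) = (\<Sum>p\<in>{0..int n}. hodge_rotation t (cvec_cnj (hodge_comp v p)))"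
    by (subst sum_hodge_comp[of v, symmetric]) (simp add: cvec_cnj_sum hodge_rotation_sum)
  also have "\<dots> = (\<Sum>p\<in>{0..int n}. cvec_cnj (hodge_char t p *s hodge_comp v p))"
    by (rule sum.cong) (auto simp: hodge_rotation_Hodge[OF cnj_in_Hodge[OF hodge_comp_in]]
        hodge_char_dual cvec_cnj_scale)
  finally show ?thesis unfolding hodge_rotation_def by (simp add: cvec_cnj_sum)
qed

lemma bform_hodge_rotation: "bform Q (hodge_rotation t u) (hodge_rotation t v) = bform Q u v"
proof -
  have "bform Q (hodge_rotation t u) (hodge_rotation t v) =
      (\<Sum>p\<in>{0..int n}. \<Sum>q\<in>{0..int n}.
        bform Q (hodge_char t p *s hodge_comp u p) (hodge_char t q *s hodge_comp v q))"
    unfolding hodge_rotation_def bform_sum_left bform_sum_right by (rule sum.swap)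
  also have "\<dots> = (\<Sum>p\<in>{0..int n}. \<Sum>q\<in>{0..int n}. bform Q (hodge_comp u p) (hodge_comp v q))"
  proof (intro sum.cong refl)
    fix p q
    show "bform Q (hodge_char t p *s hodge_comp u p) (hodge_char t q *s hodge_comp v q) =
        bform Q (hodge_comp u p) (hodge_comp v q)"
    proof (cases "q = int n - p")
      case True
      then have "hodge_char t q * hodge_char t p = 1"
        using hodge_char_dual hodge_char_cnj_mult by simp
      then show ?thesis by (simp add: bform_scale_left bform_scale_right mult.assoc[symmetric])
    next
      case False
      then show ?thesis using bform_Hodge_eq_0[OF hodge_comp_in hodge_comp_in]
        by (simp add: bform_scale_left bform_scale_right)
    qed
  qed
  also have "\<dots> = bform Q u v"
    unfolding bform_sum_left[symmetric] bform_sum_right[symmetric] sum_hodge_comp ..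
  finally show ?thesis .
qed

lemma hodge_rotation_filt: "v \<in> hodge_filt n H p \<Longrightarrow> hodge_rotation t v \<in> hodge_filt n H p"
proof -
  assume "v \<in> hodge_filt n H p"
  then obtain u where u: "\<And>p'. u p' \<in> H p'" "v = (\<Sum>p'\<in>{p..int n}. u p')"
    unfolding hodge_filt_def by blast
  have "hodge_rotation t v = (\<Sum>p'\<in>{p..int n}. hodge_char t p' *s u p')"
    unfolding u(2) by (simp add: hodge_rotation_sum hodge_rotation_Hodge[OF u(1)])
  then show ?thesis unfolding hodge_filt_def
    by (intro CollectI exI[of _ "\<lambda>p'. hodge_char t p' *s u p'"] conjI allI Hodge_scale u(1))
qed

definition hodge_rotation_matrix :: "real \<Rightarrow> real^'m^'m" where
  "hodge_rotation_matrix t = (SOME g. \<forall>v. cmat g *v v = hodge_rotation t v)"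

lemma cmat_hodge_rotation_matrix: "cmat (hodge_rotation_matrix t) *v v = hodge_rotation t v"
proof -
  have "\<exists>g. \<forall>v. cmat g *v v = hodge_rotation t v"
    by (rule real_matrix_if_commutes_cnj)
      (auto simp: hodge_rotation_add hodge_rotation_scale hodge_rotation_cnj)
  then have "\<forall>v. cmat (hodge_rotation_matrix t) *v v = hodge_rotation t v"
    unfolding hodge_rotation_matrix_def by (rule someI_ex)
  then show ?thesis ..
qed

lemma cmat_hodge_rotation_matrix_inverse:
  "cmat (hodge_rotation_matrix t) ** cmat (hodge_rotation_matrix (-t)) = mat 1"
  by (subst matrix_eq)
    (simp add: matrix_vector_mul_assoc[symmetric] cmat_hodge_rotation_matrix
      hodge_rotation_compose hodge_rotation_0)

lemma hodge_rotation_matrix_in_stabV: "hodge_rotation_matrix t \<in> stabV Q n H"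
  unfolding stabV_def
proof (intro CollectI conjI allI)
  show "hodge_rotation_matrix t \<in> GR Q"
    by (rule GR_memI) (simp add: cmat_hodge_rotation_matrix bform_hodge_rotation)
  fix p
  have "v = hodge_rotation t (hodge_rotation (-t) v)" for v
    by (simp add: hodge_rotation_compose hodge_rotation_0)
  then show "(\<lambda>v. cmat (hodge_rotation_matrix t) *v v) ` hodge_filt n H p = hodge_filt n H p"
    unfolding cmat_hodge_rotation_matrix using hodge_rotation_filt by blast
qed

lemma Ad_hodge_rotation_matrix:
  assumes X: "X \<in> gpiece Q H r"
  shows "Ad (hodge_rotation_matrix t) X = mscale (cis (real_of_int (2*r) * t)) X"
proof -
  let ?P = "cmat (hodge_rotation_matrix t)" and ?P' = "cmat (hodge_rotation_matrix (-t))"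
  let ?c = "cis (real_of_int (2*r) * t)"
  have inv: "matrix_inv ?P = ?P'"
    using cmat_hodge_rotation_matrix_inverse[of t] cmat_hodge_rotation_matrix_inverse[of "-t"]
    by (intro matrix_inv_eqI) simp_all
  have X_shift: "X *v y \<in> H (p + r)" if "y \<in> H p" for y p
    using X that unfolding gpiece_def by blast
  have "(?P ** X ** ?P') *v v = ?c *s (X *v v)" for v
  proof -
    define w where "w = hodge_rotation (-t) v"
    have v: "v = hodge_rotation t w" unfolding w_def by (simp add: hodge_rotation_compose hodge_rotation_0)
    have "(?P ** X ** ?P') *v v = hodge_rotation t (X *v (\<Sum>p\<in>{0..int n}. hodge_comp w p))"
      by (simp add: matrix_vector_mul_assoc[symmetric] cmat_hodge_rotation_matrix w_def sum_hodge_comp)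
    also have "\<dots> = (\<Sum>p\<in>{0..int n}. hodge_char t (p + r) *s (X *v hodge_comp w p))"
      by (simp add: matrix_vector_mult_sum hodge_rotation_sum
          hodge_rotation_Hodge[OF X_shift[OF hodge_comp_in]])
    also have "\<dots> = ?c *s (X *v hodge_rotation t w)"
      by (simp add: hodge_rotation_def hodge_char_shift matrix_vector_mult_sum
          vec.scale_sum_right vector_scalar_commute vector_smult_assoc)
    finally show ?thesis unfolding v .
  qed
  then show ?thesis unfolding Ad_def inv by (simp add: matrix_eq mscale_matrix_vector_mult)
qed

lemma mscale_in_Wsp: "X \<in> Wsp Q H \<Longrightarrow> mscale c X \<in> Wsp Q H"
proof -
  have gpiece_mscale: "Y \<in> gpiece Q H r \<Longrightarrow> mscale c Y \<in> gpiece Q H r" for Y r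
    unfolding gpiece_def by (auto simp: mscale_in_lie_gC mscale_matrix_vector_mult intro: Hodge_scale)
  assume "X \<in> Wsp Q H"
  then obtain A B where "X = A + B" "A \<in> gpiece Q H (-1)" "B \<in> gpiece Q H 1"
    unfolding Wsp_def by blast
  then show ?thesis unfolding Wsp_def using gpiece_mscale mscale_add by blast
qed

lemma gpiece_subset_Wsp: "gpiece Q H (-1) \<subseteq> Wsp Q H" "gpiece Q H 1 \<subseteq> Wsp Q H"
proof -
  have "0 \<in> gpiece Q H r" for r
    by (simp add: gpiece_def lie_gC_def zero_in_Hodge vec_eq_iff matrix_matrix_mult_def transpose_def)
  then show "gpiece Q H (-1) \<subseteq> Wsp Q H" "gpiece Q H 1 \<subseteq> Wsp Q H"
    unfolding Wsp_def by force+
qed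

end

lemma alt_multilinear_on_scale_arg:
  assumes "alt_multilinear_on W k \<omega>" "length xs = k" "set xs \<subseteq> W" "i < k"
  shows "\<omega> (xs[i := mscale c (xs ! i)]) = c * \<omega> xs"
proof -
  have xi: "xs ! i \<in> W" using assms by auto
  have "mscale c (xs ! i) = mscale (c - 1) (xs ! i) + xs ! i"
    by (simp add: mscale_def vec_eq_iff algebra_simps)
  then have "\<omega> (xs[i := mscale c (xs ! i)]) = (c - 1) * \<omega> xs + \<omega> xs"
    using assms xi unfolding alt_multilinear_on_def by simp
  then show ?thesis by (simp add: algebra_simps)
qed

lemma alt_multilinear_on_scale_args:
  assumes \<omega>: "alt_multilinear_on W k \<omega>" and W: "\<And>X c. X \<in> W \<Longrightarrow> mscale c X \<in> W"
    and xs: "length xs = k" "set xs \<subseteq> W"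
  shows "\<omega> (map (\<lambda>i. mscale (f i) (xs ! i)) [0..<k]) = (\<Prod>i<k. f i) * \<omega> xs"
proof -
  define ys where "ys j = map (\<lambda>i. if i < j then mscale (f i) (xs ! i) else xs ! i) [0..<k]" for j
  have "set (ys j) \<subseteq> W" for j
    using xs unfolding ys_def by (auto intro!: W)
  have "\<omega> (ys j) = (\<Prod>i<j. f i) * \<omega> xs" if "j \<le> k" for j
    using that
  proof (induction j)
    case 0
    have "ys 0 = xs" unfolding ys_def using xs(1) by (simp add: list_eq_iff_nth_eq)
    then show ?case by simp
  next
    case (Suc j)
    have "ys (Suc j) = (ys j)[j := mscale (f j) (ys j ! j)]"
      unfolding ys_def using Suc.prems by (auto simp: list_eq_iff_nth_eq nth_list_update)
    then have "\<omega> (ys (Suc j)) = f j * \<omega> (ys j)"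
      using alt_multilinear_on_scale_arg[OF \<omega>, of "ys j" j] Suc.prems \<open>set (ys j) \<subseteq> W\<close>
      by (simp add: ys_def)
    then show ?case using Suc by simp
  qed
  moreover have "ys k = map (\<lambda>i. mscale (f i) (xs ! i)) [0..<k]"
    unfolding ys_def by (intro map_cong) auto
  ultimately show ?thesis by (metis order.refl)
qed

lemma prod_lessThan_if_split: "(\<Prod>i<a + b. if i < a then x else y) = x ^ a * (y::'a::comm_monoid_mult) ^ b"
  by (induction b) (simp_all add: mult_ac)

lemma (in polarized_hodge) invariant_form_eigenvalue:
  assumes alt: "alt_multilinear_on (Wsp Q H) k \<omega>"
    and inv: "Ad_invariant (stabV Q n H) (Wsp Q H) k \<omega>"
    and k: "length as + length bs = k"
    and as: "set as \<subseteq> gpiece Q H (-1)" and bs: "set bs \<subseteq> gpiece Q H 1"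
  shows "\<omega> (as @ bs) = cis (2 * t * (real (length bs) - real (length as))) * \<omega> (as @ bs)"
proof -
  define f where "f i = (if i < length as then cis (-2 * t) else cis (2 * t))" for i
  have xs: "length (as @ bs) = k" "set (as @ bs) \<subseteq> Wsp Q H"
    using k as bs gpiece_subset_Wsp by auto
  have Ad_as: "Ad (hodge_rotation_matrix t) (as ! i) = mscale (cis (-2 * t)) (as ! i)"
    if "i < length as" for i
    using Ad_hodge_rotation_matrix[of "as ! i" "-1" t] nth_mem[OF that] as by auto
  have Ad_bs: "Ad (hodge_rotation_matrix t) (bs ! i) = mscale (cis (2 * t)) (bs ! i)"
    if "i < length bs" for i
    using Ad_hodge_rotation_matrix[of "bs ! i" 1 t] nth_mem[OF that] bs by auto
  have "map (Ad (hodge_rotation_matrix t)) (as @ bs) = map (\<lambda>i. mscale (f i) ((as @ bs) ! i)) [0..<k]"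
    using k unfolding f_def by (auto simp: list_eq_iff_nth_eq nth_append Ad_as Ad_bs)
  then have "\<omega> (as @ bs) = (\<Prod>i<k. f i) * \<omega> (as @ bs)"
    using inv hodge_rotation_matrix_in_stabV xs alt_multilinear_on_scale_args[OF alt mscale_in_Wsp xs]
    unfolding Ad_invariant_def by metis
  also have "(\<Prod>i<k. f i) = cis (-2 * t) ^ length as * cis (2 * t) ^ length bs"
    unfolding f_def k[symmetric] by (rule prod_lessThan_if_split)
  also have "\<dots> = cis (2 * t * (real (length bs) - real (length as)))"
    by (simp only: Complex.DeMoivre Complex.cis_mult) (simp add: algebra_simps)
  finally show ?thesis .
qed

theorem theorem4p10:
  fixes Q :: "real^'m^'m" and n :: nat and H :: "int \<Rightarrow> (complex^'m) set"
    and k :: nat and \<omega> :: "(complex^'m^'m) list \<Rightarrow> complex"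
  assumes "polarized_hodge_structure Q n H"
    and "alt_multilinear_on (Wsp Q H) k \<omega>"
    and "Ad_invariant (stabV Q n H) (Wsp Q H) k \<omega>"
  shows "sum_of_pp_type Q H k \<omega>"
  unfolding sum_of_pp_type_def
proof (intro allI impI)
  interpret polarized_hodge Q n H by (rule polarized_hodge.intro) (rule assms(1))
  fix as bs
  assume k: "length as + length bs = k" and ne: "length as \<noteq> length bs"
    and as: "set as \<subseteq> gpiece Q H (-1)" and bs: "set bs \<subseteq> gpiece Q H 1"
  define d where "d = real (length bs) - real (length as)"
  have "d \<noteq> 0" using ne by (simp add: d_def)
  have "\<omega> (as @ bs) = cis (2 * (pi / (2 * d)) * d) * \<omega> (as @ bs)"
    unfolding d_def by (rule invariant_form_eigenvalue[OF assms(2,3) k as bs])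
  also have "2 * (pi / (2 * d)) * d = pi" using \<open>d \<noteq> 0\<close> by simp
  finally show "\<omega> (as @ bs) = 0" by simp
qed

end
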